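(* Let $(X,\ast,u,d)$ be a finite block GL-rack and $c$ the size of each of its blocks. Then for every oriented Legendrian knot $K$, $\operatorname{Col}_X(K)$ is divisible by $c$.
   Context: A rack is a set $X$ with a binary operation $\ast$ such that for every $y\in X$ the map $x\mapsto x\ast y$ is a bijection of $X$ and $(x\ast y)\ast z=(x\ast z)\ast(y\ast z)$ for all $x,y,z$. A GL-rack is a quadruple $(X,\ast,u,d)$ where $(X,\ast)$ is a rack and $u,d\colon X\to X$ are maps such that for all $x,y\in X$: $u(d(x\ast x))=d(u(x\ast x))=x$; $u(x\ast y)=u(x)\ast y$ and $d(x\ast y)=d(x)\ast y$; $x\ast u(y)=x\ast d(y)=x\ast y$. The diagonal map is $\Delta(x)=x\ast x$; for finite $X$ it is a bijection with $\Delta=(u\circ d)^{-1}$. A finite GL-rack is a block GL-rack if all cycles in the disjoint cycle decomposition of $\Delta$ (fixed points counted as $1$-cycles) have the same length $c$; the supports of these cycles are the blocks. Legendrian knots in $(\mathbb{R}^3,\xi_{\mathrm{std}})$ are represented by oriented front diagrams. Given a finite GL-rack $X$ and a front diagram $D$ of $K$, a coloring is an assignment of elements of $X$ to the semi-arcs of $D$ (segments bounded by undercrossings or cusps) such that, following the orientation through a cusp, the color changes from $x$ to $u(x)$ if the cusp is traversed upward and to $d(x)$ if traversed downward; and at each crossing whose over-strand is colored $y$, if the under semi-arc on the right of the oriented over-strand is colored $x$, the one on its left is colored $x\ast y$. $\operatorname{Col}_X(K)$ is the number of colorings (a Legendrian isotopy invariant, equal to $|\operatorname{Hom}(\operatorname{GLR}(K),X)|$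 for the fundamental GL-rack $\operatorname{GLR}(K)$). *)

theory Defs
  imports Main
begin

definition rack :: "('a \<Rightarrow> 'a \<Rightarrow> 'a) \<Rightarrow> bool" where
  "rack op \<longleftrightarrow> (\<forall>y. bij (\<lambda>x. op x y)) \<and>
     (\<forall>x y z. op (op x y) z = op (op x z) (op y z))"

definition GL_rack :: "('a \<Rightarrow> 'a \<Rightarrow> 'a) \<Rightarrow> ('a \<Rightarrow> 'a) \<Rightarrow> ('a \<Rightarrow> 'a) \<Rightarrow> bool" where
  "GL_rack op u d \<longleftrightarrow> rack op \<and>
     (\<forall>x. u (d (op x x)) = x \<and> d (u (op x x)) = x) \<and>
     (\<forall>x y. u (op x y) = op (u x) y \<and> d (op x y) = op (d x) y) \<and>
     (\<forall>x y. op x (u y) = op x y \<and> op x (d y) = op x y)"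

definition diag :: "('a \<Rightarrow> 'a \<Rightarrow> 'a) \<Rightarrow> 'a \<Rightarrow> 'a" where
  "diag op x = op x x"

definition diag_cycle_length :: "('a \<Rightarrow> 'a \<Rightarrow> 'a) \<Rightarrow> 'a \<Rightarrow> nat" where
  "diag_cycle_length op x = card (range (\<lambda>k. (diag op ^^ k) x))"

text \<open>A (finite) block GL-rack whose blocks (cycles of the diagonal) all have size c.\<close>
definition block_GL_rack ::
  "('a::finite \<Rightarrow> 'a \<Rightarrow> 'a) \<Rightarrow> ('a \<Rightarrow> 'a) \<Rightarrow> ('a \<Rightarrow> 'a) \<Rightarrow> nat \<Rightarrow> bool" where
  "block_GL_rack op u d c \<longleftrightarrow> GL_rack op u d \<and> (\<forall>x. diag_cycle_length op x = c)"

text \<open>Traversing an oriented front diagram of a knot once, starting at some point,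
  one meets a cyclic sequence of events: a cusp traversed upward, a cusp traversed
  downward, passing over crossing k, or passing under crossing k.\<close>
datatype front_event = CuspUp | CuspDown | Over nat | Under nat

definition front_code :: "front_event list \<Rightarrow> bool" where
  "front_code ev \<longleftrightarrow> ev \<noteq> [] \<and> (CuspUp \<in> set ev \<or> CuspDown \<in> set ev) \<and>
     (\<forall>k. length (filter (\<lambda>e. e = Over k) ev) \<le> 1 \<and>
          length (filter (\<lambda>e. e = Under k) ev) \<le> 1 \<and>
          (Over k \<in> set ev \<longleftrightarrow> Under k \<in> set ev))"

text \<open>A coloring assigns to each event position i the color of the strand just after
  event i (so positions between two consecutive undercrossings/cusps carry the color
  of that semi-arc). rl k means: at crossing k the under-strand passes from the
  right of the oriented over-strand to its left.\<close>
definition front_coloring ::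
  "('a \<Rightarrow> 'a \<Rightarrow> 'a) \<Rightarrow> ('a \<Rightarrow> 'a) \<Rightarrow> ('a \<Rightarrow> 'a) \<Rightarrow> front_event list \<Rightarrow> (nat \<Rightarrow> bool)
    \<Rightarrow> 'a list \<Rightarrow> bool" where
  "front_coloring op u d ev rl cs \<longleftrightarrow> length cs = length ev \<and>
     (\<forall>i < length ev. let p = cs ! ((i + length ev - 1) mod length ev) in
        (case ev ! i of
           CuspUp \<Rightarrow> cs ! i = u p
         | CuspDown \<Rightarrow> cs ! i = d p
         | Over k \<Rightarrow> cs ! i = p
         | Under k \<Rightarrow> (\<forall>j < length ev. ev ! j = Over k \<longrightarrow>
              (if rl k then cs ! i = op p (cs ! j) else p = op (cs ! i) (cs ! j)))))"

definition Col ::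
  "('a \<Rightarrow> 'a \<Rightarrow> 'a) \<Rightarrow> ('a \<Rightarrow> 'a) \<Rightarrow> ('a \<Rightarrow> 'a) \<Rightarrow> front_event list \<Rightarrow> (nat \<Rightarrow> bool) \<Rightarrow> nat" where
  "Col op u d ev rl = card {cs. front_coloring op u d ev rl cs}"

end

theory Submission
  imports Defs "HOL-Combinatorics.Orbits"
begin

text \<open>By right self-distributivity the diagonal map \<Delta> of a GL-rack is an injective endomorphism
  of (X, \<ast>, u, d), so recoloring every semi-arc by \<Delta> maps colorings to colorings. A coloring is
  a nonempty list and every \<Delta>-cycle has length c, so every orbit of colorings under this action
  has exactly c elements, and these orbits partition the finite set of colorings.\<close>

lemma inj_self_in_orbit:
  fixes f :: "'a::finite \<Rightarrow> 'a"
  assumes "inj f"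
  shows "x \<in> orbit f x"
proof -
  obtain n where "0 < n" "(f ^^ n) x = x"
    using funpow_inj_finite[OF assms] by auto
  then show ?thesis
    by (force simp: orbit_altdef)
qed

lemma card_range_funpow_eq_funpow_dist1:
  assumes "x \<in> orbit f x"
  shows "card (range (\<lambda>k. (f ^^ k) x)) = funpow_dist1 f x x"
proof -
  have "range (\<lambda>k. (f ^^ k) x) = (\<lambda>k. (f ^^ k) x) ` {0..<funpow_dist1 f x x}"
    using orbit_altdef_self_in[OF assms] orbit_conv_funpow_dist1[OF assms] by auto
  then show ?thesis
    using inj_on_funpow_dist1[OF assms] by (simp add: card_image)
qed

lemma funpow_map: "(map (f :: 'a \<Rightarrow> 'a) ^^ k) xs = map (f ^^ k) xs"
  by (induction k) (simp_all add: comp_def)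

lemma card_range_funpow_map:
  fixes f :: "'a::finite \<Rightarrow> 'a"
  assumes "inj f" and "xs \<noteq> []"
    and card_orbit: "\<And>x. x \<in> set xs \<Longrightarrow> card (range (\<lambda>k. (f ^^ k) x)) = c"
  shows "card (range (\<lambda>k. (map f ^^ k) xs)) = c"
proof -
  let ?orbit = "range (\<lambda>k. (map f ^^ k) xs)"
  have periodic: "(f ^^ c) x = x" if "x \<in> set xs" for x
  proof -
    have "x \<in> orbit f x"
      using \<open>inj f\<close> by (rule inj_self_in_orbit)
    then have "(f ^^ funpow_dist1 f x x) x = x"
      by (rule funpow_dist1_prop)
    then show ?thesis
      using card_range_funpow_eq_funpow_dist1[OF \<open>x \<in> orbit f x\<close>] card_orbit[OF that] by metis
  qed
  have "0 < c"
    using card_orbit[of "hd xs", symmetric] \<open>xs \<noteq> []\<close> by (simp add: card_gt_0_iff)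
  have "(map f ^^ k) xs = (map f ^^ (k mod c)) xs" for k
    using periodic by (simp add: funpow_map funpow_mod_eq)
  then have orbit_eq: "?orbit = (\<lambda>k. (map f ^^ k) xs) ` {..<c}"
    using \<open>0 < c\<close> by auto (metis lessThan_iff mod_less_divisor rev_image_eqI)
  then have "finite ?orbit"
    by simp
  have "range (\<lambda>k. (f ^^ k) (hd xs)) = hd ` ?orbit"
    using \<open>xs \<noteq> []\<close> by (auto simp: funpow_map hd_map image_image)
  then have "c = card (hd ` ?orbit)"
    using card_orbit[OF hd_in_set[OF \<open>xs \<noteq> []\<close>]] by simp
  also have "\<dots> \<le> card ?orbit"
    using \<open>finite ?orbit\<close> by (rule card_image_le)
  finally have "c \<le> card ?orbit" .
  moreover have "card ?orbit \<le> c"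
    using orbit_eq by (metis card_image_le card_lessThan finite_lessThan)
  ultimately show ?thesis
    by simp
qed

lemma dvd_card_if_equal_orbit_cards:
  assumes "finite S" and "g ` S \<subseteq> S"
    and card_orbit: "\<And>s. s \<in> S \<Longrightarrow> card (range (\<lambda>k. (g ^^ k) s)) = c"
  shows "c dvd card S"
proof -
  define orb where "orb s = range (\<lambda>k. (g ^^ k) s)" for s
  have funpow_in: "(g ^^ k) s \<in> S" if "s \<in> S" for s k
    using that \<open>g ` S \<subseteq> S\<close> by (induction k) auto
  then have orb_subset: "orb s \<subseteq> S" if "s \<in> S" for s
    using that unfolding orb_def by auto
  have self_in_orb: "s \<in> orb s" for s
    unfolding orb_def by (metis funpow_0 id_apply rangeI)
  \<comment> \<open>No injectivity of g is needed: orb t \<subseteq> orb s, and equal finite cardinalities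
    force equality.\<close>
  have orb_eq: "orb t = orb s" if "s \<in> S" "t \<in> orb s" for s t
  proof -
    obtain i where t: "t = (g ^^ i) s"
      using \<open>t \<in> orb s\<close> unfolding orb_def by auto
    then have "(g ^^ k) t = (g ^^ (k + i)) s" for k
      by (simp add: funpow_add)
    then have "orb t \<subseteq> orb s"
      unfolding orb_def by (simp add: image_subset_iff)
    moreover have "card (orb t) = card (orb s)"
      using card_orbit funpow_in t \<open>s \<in> S\<close> unfolding orb_def by simp
    moreover have "finite (orb s)"
      using orb_subset[OF \<open>s \<in> S\<close>] \<open>finite S\<close> by (rule finite_subset)
    ultimately show ?thesis
      by (simp add: card_subset_eq)
  qed
  have "\<Union> (orb ` S) = S"
    using orb_subset self_in_orb by blast
  moreover have "c * card (orb ` S) = card (\<Union> (orb ` S))"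
  proof (rule card_partition)
    show "finite (orb ` S)" and "finite (\<Union> (orb ` S))"
      using \<open>finite S\<close> \<open>\<Union> (orb ` S) = S\<close> by simp_all
    show "card B = c" if "B \<in> orb ` S" for B
      using that card_orbit unfolding orb_def by auto
    show "B1 \<inter> B2 = {}" if "B1 \<in> orb ` S" "B2 \<in> orb ` S" "B1 \<noteq> B2" for B1 B2
      using that orb_eq by blast
  qed
  ultimately have "card S = c * card (orb ` S)"
    by simp
  then show ?thesis
    by (rule dvdI)
qed

lemma rack_right_diag:
  assumes "rack op"
  shows "op x (diag op y) = op x y"
proof -
  have "surj (\<lambda>x. op x y)"
    using assms unfolding rack_def by (simp add: bij_is_surj)
  then obtain a where "x = op a y"
    by (metis surjD)
  moreover have "op (op a y) y = op (op a y) (op y y)"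
    using assms unfolding rack_def by blast
  ultimately show ?thesis
    unfolding diag_def by simp
qed

lemma rack_diag_op:
  assumes "rack op"
  shows "diag op (op x y) = op (diag op x) (diag op y)"
proof -
  have "diag op (op x y) = op (diag op x) y"
    using assms unfolding rack_def diag_def by simp
  then show ?thesis
    by (simp add: rack_right_diag[OF assms])
qed

lemma GL_rack_diag_u: "GL_rack op u d \<Longrightarrow> diag op (u x) = u (diag op x)"
  unfolding GL_rack_def diag_def by simp

lemma GL_rack_diag_d: "GL_rack op u d \<Longrightarrow> diag op (d x) = d (diag op x)"
  unfolding GL_rack_def diag_def by simp

lemma GL_rack_inj_diag:
  assumes "GL_rack op u d"
  shows "inj (diag op)"
proof (rule inj_on_inverseI)
  show "u (d (diag op x)) = x" for x
    using assms unfolding GL_rack_def diag_def by blast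
qed

lemma front_coloring_map:
  assumes op_hom: "\<And>x y. f (op x y) = op (f x) (f y)"
    and u_hom: "\<And>x. f (u x) = u (f x)" and d_hom: "\<And>x. f (d x) = d (f x)"
    and coloring: "front_coloring op u d ev rl cs"
  shows "front_coloring op u d ev rl (map f cs)"
  unfolding front_coloring_def
proof (intro conjI allI impI)
  let ?n = "length ev"
  show "length (map f cs) = ?n"
    using coloring unfolding front_coloring_def by simp
  fix i
  assume "i < ?n"
  define p where "p = (i + ?n - 1) mod ?n"
  have "length cs = ?n"
    using coloring unfolding front_coloring_def by simp
  moreover have "p < ?n"
    using \<open>i < ?n\<close> unfolding p_def by (metis mod_less_divisor not_less_zero gr0I)
  moreover have "case ev ! i of
           CuspUp \<Rightarrow> cs ! i = u (cs ! p)
         | CuspDown \<Rightarrow> cs ! i = d (cs ! p)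
         | Over k \<Rightarrow> cs ! i = cs ! p
         | Under k \<Rightarrow> (\<forall>j < ?n. ev ! j = Over k \<longrightarrow>
              (if rl k then cs ! i = op (cs ! p) (cs ! j) else cs ! p = op (cs ! i) (cs ! j)))"
    using coloring \<open>i < ?n\<close> unfolding front_coloring_def p_def Let_def by simp
  ultimately show "let q = map f cs ! p in
        (case ev ! i of
           CuspUp \<Rightarrow> map f cs ! i = u q
         | CuspDown \<Rightarrow> map f cs ! i = d q
         | Over k \<Rightarrow> map f cs ! i = q
         | Under k \<Rightarrow> (\<forall>j < ?n. ev ! j = Over k \<longrightarrow>
              (if rl k then map f cs ! i = op q (map f cs ! j)
               else q = op (map f cs ! i) (map f cs ! j))))"
    using \<open>i < ?n\<close> by (auto simp: Let_def op_hom u_hom d_hom split: front_event.splits)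
qed

lemma finite_front_colorings:
  "finite {cs :: 'a::finite list. front_coloring op u d ev rl cs}"
  by (rule finite_subset[OF _ finite_lists_length_eq[of UNIV "length ev"]])
    (auto simp: front_coloring_def)

theorem corollary3p12:
  fixes op :: "'a::finite \<Rightarrow> 'a \<Rightarrow> 'a" and u d :: "'a \<Rightarrow> 'a" and c :: nat
    and ev :: "front_event list" and rl :: "nat \<Rightarrow> bool"
  assumes "block_GL_rack op u d c"
    and "front_code ev"
  shows "c dvd Col op u d ev rl"
proof -
  have GL: "GL_rack op u d" and cycle_length: "\<And>x. diag_cycle_length op x = c"
    using assms(1) unfolding block_GL_rack_def by auto
  then have "rack op"
    unfolding GL_rack_def by simp
  let ?colorings = "{cs. front_coloring op u d ev rl cs}"
  have "map (diag op) ` ?colorings \<subseteq> ?colorings"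
    using front_coloring_map[of "diag op" op u d, OF rack_diag_op[OF \<open>rack op\<close>]
        GL_rack_diag_u[OF GL] GL_rack_diag_d[OF GL]]
    by blast
  moreover have "card (range (\<lambda>k. (map (diag op) ^^ k) cs)) = c" if "cs \<in> ?colorings" for cs
  proof (rule card_range_funpow_map[OF GL_rack_inj_diag[OF GL]])
    have "length cs = length ev" and "ev \<noteq> []"
      using that assms(2) unfolding front_coloring_def front_code_def by simp_all
    then show "cs \<noteq> []"
      by auto
    show "card (range (\<lambda>k. (diag op ^^ k) x)) = c" for x
      using cycle_length[of x] unfolding diag_cycle_length_def .
  qed
  ultimately have "c dvd card ?colorings"
    by (intro dvd_card_if_equal_orbit_cards[OF finite_front_colorings])
  then show ?thesis
    unfolding Col_def .
qed

end
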